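(* Let $P$ be a finite $2$-group such that $P/Z(P)$ is elementary abelian. Then $(xy)^4=x^4y^4$ for all $x,y\in P$, and in particular $\Omega_2(P)$ has exponent at most $4$. Furthermore, if $B$ is a group of automorphisms of $P$ of odd order with $[\Omega_2(P),B]=1$, then $B=1$.
   Context: $\Omega_2(P)$ denotes the subgroup of $P$ generated by the elements of order at most $4$. $[\Omega_2(P),B]=1$ means every element of $B$ fixes every element of $\Omega_2(P)$. *)

theory Defs
  imports "HOL-Algebra.Algebra"
begin

definition center :: "('a, 'b) monoid_scheme \<Rightarrow> 'a set" where
  "center G = {z \<in> carrier G. \<forall>x \<in> carrier G. z \<otimes>\<^bsub>G\<^esub> x = x \<otimes>\<^bsub>G\<^esub> z}"

definition elementary_abelian :: "nat \<Rightarrow> ('a, 'b) monoid_scheme \<Rightarrow> bool" where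
  "elementary_abelian p G \<longleftrightarrow> comm_group G \<and> (\<forall>a \<in> carrier G. a [^]\<^bsub>G\<^esub> p = \<one>\<^bsub>G\<^esub>)"

definition Omega2 :: "('a, 'b) monoid_scheme \<Rightarrow> 'a set" where
  "Omega2 G = generate G {x \<in> carrier G. group.ord G x \<le> 4}"

end

theory Submission
  imports Defs
begin

(*
  Abelianness of
  the quotient makes every commutator central, and exponent 2 makes every
  square central.  A commutator c then satisfies c^2 = 1, whence
  (xy)^2 = c x^2 y^2 and (xy)^4 = x^4 y^4: the fourth-power map is an
  endomorphism.  Hence the elements with x^4 = 1 form a subgroup, which in a
  2-group coincides with Omega_2(P); so Omega_2(P) has exponent 4.
  For an automorphism b of odd order m fixing Omega_2(P) we show by induction
  on k that b fixes every x with x^(4^k) = 1: if b fixes x^4, then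
  z = x^-1 b(x) has z^4 = 1, so b fixes z, b^m(x) = x z^m, and z^m = 1; the
  order of z divides both 4 and m, so z = 1.  Since P has exponent dividing
  4^n, b is the identity.
*)

lemma dvd_four_if_dvd_power_of_two:
  fixes d :: nat
  assumes "d dvd 2 ^ n" and "d \<le> 4"
  shows "d dvd 4"
proof -
  obtain i where d: "d = 2 ^ i"
    using assms(1) divides_primepow_nat[OF two_is_prime_nat] by blast
  have "(2::nat) ^ i \<le> 2 ^ 2" using assms(2) d by simp
  hence "i \<le> 2" by (rule power_le_imp_le_exp[rotated]) simp
  hence "(2::nat) ^ i dvd 2 ^ 2" by (rule le_imp_power_dvd)
  thus ?thesis using d by simp
qed

lemma common_divisor_four_odd:
  fixes d m :: nat
  assumes "d dvd 4" and "d dvd m" and "odd m"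
  shows "d = 1"
proof -
  have "coprime (2 * 2) m" using assms(3) by (simp only: coprime_mult_left_iff coprime_left_2_iff_odd) simp
  hence "coprime 4 m" by simp
  thus ?thesis using assms(1,2) coprime_common_divisor_nat by blast
qed

context group
begin

section \<open>The centre and quotients\<close>

lemma center_subgroup: "subgroup (center G) G"
proof (rule subgroupI)
  show "center G \<subseteq> carrier G" and "center G \<noteq> {}"
    by (auto simp: center_def)
next
  fix a assume a: "a \<in> center G"
  hence ac: "a \<in> carrier G" by (simp add: center_def)
  show "inv a \<in> center G"
    unfolding center_def
  proof (safe)
    show "inv a \<in> carrier G" using ac by simp
    fix x assume x: "x \<in> carrier G"
    have "a \<otimes> inv x = inv x \<otimes> a" using a x by (simp add: center_def)
    hence "inv (a \<otimes> inv x) = inv (inv x \<otimes> a)" by simp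
    thus "inv a \<otimes> x = x \<otimes> inv a" using ac x by (simp add: inv_mult_group)
  qed
next
  fix a b assume a: "a \<in> center G" and b: "b \<in> center G"
  hence ac: "a \<in> carrier G" and bc: "b \<in> carrier G" by (auto simp: center_def)
  show "a \<otimes> b \<in> center G"
    unfolding center_def
  proof (safe)
    show "a \<otimes> b \<in> carrier G" using ac bc by simp
    fix x assume x: "x \<in> carrier G"
    have "a \<otimes> b \<otimes> x = a \<otimes> (x \<otimes> b)" using b x ac bc by (simp add: m_assoc center_def)
    also have "\<dots> = (x \<otimes> a) \<otimes> b" using a x ac bc by (simp add: m_assoc[symmetric] center_def)
    also have "\<dots> = x \<otimes> (a \<otimes> b)" using ac bc x by (simp add: m_assoc)
    finally show "a \<otimes> b \<otimes> x = x \<otimes> (a \<otimes> b)" .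
  qed
qed

lemma center_normal: "center G \<lhd> G"
proof -
  have "x \<otimes> h \<otimes> inv x \<in> center G" if x: "x \<in> carrier G" and h: "h \<in> center G" for x h
  proof -
    have hc: "h \<in> carrier G" using h by (simp add: center_def)
    have "x \<otimes> h \<otimes> inv x = h \<otimes> x \<otimes> inv x" using h x by (simp add: center_def)
    also have "\<dots> = h" using hc x by (simp add: m_assoc)
    finally show ?thesis using h by simp
  qed
  thus ?thesis using center_subgroup normal_inv_iff by blast
qed

lemma center_left_commute:
  assumes "z \<in> center G" "x \<in> carrier G" "w \<in> carrier G"
  shows "x \<otimes> (z \<otimes> w) = z \<otimes> (x \<otimes> w)"
proof -
  have zc: "z \<in> carrier G" and zx: "z \<otimes> x = x \<otimes> z" using assms by (auto simp: center_def)
  have "x \<otimes> (z \<otimes> w) = (x \<otimes> z) \<otimes> w" using assms(2,3) zc by (simp add: m_assoc)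
  also have "\<dots> = z \<otimes> (x \<otimes> w)" using assms(2,3) zc by (simp add: zx[symmetric] m_assoc)
  finally show ?thesis .
qed

lemma commute_modulo_normal:
  assumes N: "N \<lhd> G" and ab: "comm_group (G Mod N)"
    and x: "x \<in> carrier G" and y: "y \<in> carrier G"
  shows "\<exists>c\<in>N. y \<otimes> x = c \<otimes> (x \<otimes> y)"
proof -
  interpret quotient: comm_group "G Mod N" by (rule ab)
  have coset: "N #> u \<in> carrier (G Mod N)" if "u \<in> carrier G" for u
    using that by (simp add: carrier_FactGroup)
  have "N #> (x \<otimes> y) = (N #> x) \<otimes>\<^bsub>G Mod N\<^esub> (N #> y)"
    using x y normal.rcos_sum[OF N] by simp
  also have "\<dots> = (N #> y) \<otimes>\<^bsub>G Mod N\<^esub> (N #> x)"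
    using quotient.m_comm coset x y by blast
  also have "\<dots> = N #> (y \<otimes> x)" using x y normal.rcos_sum[OF N] by simp
  finally have "y \<otimes> x \<in> N #> (x \<otimes> y)"
    using x y rcos_self normal_imp_subgroup[OF N] by simp
  thus ?thesis by (auto simp: r_coset_def)
qed

lemma square_in_normal:
  assumes N: "N \<lhd> G"
    and exp2: "\<forall>a\<in>carrier (G Mod N). a [^]\<^bsub>G Mod N\<^esub> (2::nat) = \<one>\<^bsub>G Mod N\<^esub>"
    and x: "x \<in> carrier G"
  shows "x \<otimes> x \<in> N"
proof -
  have "N #> (x [^] (2::nat)) = (N #> x) [^]\<^bsub>G Mod N\<^esub> (2::nat)"
    using normal.FactGroup_pow[OF N x] by simp
  also have "\<dots> = N" using exp2 x by (simp add: carrier_FactGroup)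
  finally have "N #> (x [^] (2::nat)) = N" .
  moreover have "x [^] (2::nat) \<in> N #> (x [^] (2::nat))"
    using x normal_imp_subgroup[OF N] by (simp add: rcos_self)
  ultimately have "x [^] (2::nat) \<in> N" by simp
  thus ?thesis using x by (simp add: numeral_2_eq_2)
qed

section \<open>The fourth-power map is an endomorphism\<close>

text \<open>Then
  \<open>c\<^sup>2 = 1\<close>, because conjugating \<open>x\<^sup>2\<close> by \<open>y\<close> multiplies it by \<open>c\<^sup>2\<close>.\<close>
lemma central_commutator_square:
  assumes c: "c \<in> center G" and x: "x \<in> carrier G" and y: "y \<in> carrier G"
    and xx: "x \<otimes> x \<in> center G" and yx: "y \<otimes> x = c \<otimes> (x \<otimes> y)"
  shows "c \<otimes> c = \<one>"
proof -
  have cc: "c \<in> carrier G" using c by (simp add: center_def)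
  have "y \<otimes> (x \<otimes> x) = (c \<otimes> (x \<otimes> y)) \<otimes> x" using x y yx by (simp add: m_assoc[symmetric])
  also have "\<dots> = c \<otimes> (x \<otimes> (c \<otimes> (x \<otimes> y)))" using x y cc yx by (simp add: m_assoc)
  also have "\<dots> = (c \<otimes> c) \<otimes> ((x \<otimes> x) \<otimes> y)"
    using center_left_commute[OF c x, of "x \<otimes> y"] x y cc by (simp add: m_assoc)
  finally have "(c \<otimes> c) \<otimes> ((x \<otimes> x) \<otimes> y) = \<one> \<otimes> ((x \<otimes> x) \<otimes> y)"
    using xx y by (simp add: center_def)
  thus ?thesis using x y cc by (metis r_cancel m_closed one_closed)
qed

lemma square_of_product:
  assumes c: "c \<in> center G" and x: "x \<in> carrier G" and y: "y \<in> carrier G"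
    and yx: "y \<otimes> x = c \<otimes> (x \<otimes> y)"
  shows "(x \<otimes> y) \<otimes> (x \<otimes> y) = c \<otimes> ((x \<otimes> x) \<otimes> (y \<otimes> y))"
proof -
  have cc: "c \<in> carrier G" using c by (simp add: center_def)
  have "(x \<otimes> y) \<otimes> (x \<otimes> y) = x \<otimes> ((y \<otimes> x) \<otimes> y)" using x y by (simp add: m_assoc)
  also have "\<dots> = x \<otimes> ((c \<otimes> (x \<otimes> y)) \<otimes> y)" using yx by simp
  also have "\<dots> = c \<otimes> (x \<otimes> (x \<otimes> (y \<otimes> y)))"
    using center_left_commute[OF c x, of "x \<otimes> (y \<otimes> y)"] x y cc by (simp add: m_assoc)
  finally show ?thesis using x y by (simp add: m_assoc)
qed

lemma pow_four: "a \<in> carrier G \<Longrightarrow> a [^] (4::nat) = (a \<otimes> a) \<otimes> (a \<otimes> a)"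
  by (simp add: numeral_eq_Suc m_assoc)

lemma fourth_power_mult:
  assumes sq: "\<forall>x\<in>carrier G. x \<otimes> x \<in> center G"
    and comm: "\<forall>x\<in>carrier G. \<forall>y\<in>carrier G. \<exists>c\<in>center G. y \<otimes> x = c \<otimes> (x \<otimes> y)"
    and x: "x \<in> carrier G" and y: "y \<in> carrier G"
  shows "(x \<otimes> y) [^] (4::nat) = x [^] (4::nat) \<otimes> y [^] (4::nat)"
proof -
  obtain c where c: "c \<in> center G" and yx: "y \<otimes> x = c \<otimes> (x \<otimes> y)" using comm x y by blast
  define x2 where "x2 = x \<otimes> x"
  define y2 where "y2 = y \<otimes> y"
  have x2_central: "x2 \<in> center G" and y2_central: "y2 \<in> center G" using sq x y by (simp_all add: x2_def y2_def)
  have cc: "c \<in> carrier G" and x2c: "x2 \<in> carrier G" and y2c: "y2 \<in> carrier G"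
    using c x y by (simp_all add: x2_def y2_def center_def)
  have c2: "c \<otimes> c = \<one>"
    using central_commutator_square[OF c x y _ yx] x2_central by (simp add: x2_def)
  have "(x \<otimes> y) [^] (4::nat) = (c \<otimes> (x2 \<otimes> y2)) \<otimes> (c \<otimes> (x2 \<otimes> y2))"
    using pow_four[of "x \<otimes> y"] square_of_product[OF c x y yx] x y by (simp add: x2_def y2_def)
  also have "\<dots> = c \<otimes> (c \<otimes> (x2 \<otimes> (y2 \<otimes> (x2 \<otimes> y2))))"
    using center_left_commute[OF c y2c, of "x2 \<otimes> y2"] center_left_commute[OF c x2c, of "y2 \<otimes> (x2 \<otimes> y2)"]
      cc x2c y2c by (simp add: m_assoc)
  also have "\<dots> = (c \<otimes> c) \<otimes> (x2 \<otimes> ((y2 \<otimes> x2) \<otimes> y2))" using cc x2c y2c by (simp add: m_assoc)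
  also have "\<dots> = x2 \<otimes> ((x2 \<otimes> y2) \<otimes> y2)"
    using c2 y2_central x2c y2c by (simp add: center_def)
  also have "\<dots> = (x2 \<otimes> x2) \<otimes> (y2 \<otimes> y2)" using x2c y2c by (simp add: m_assoc)
  also have "\<dots> = x [^] (4::nat) \<otimes> y [^] (4::nat)" using pow_four x y by (simp add: x2_def y2_def)
  finally show ?thesis .
qed

section \<open>\<open>\<Omega>\<^sub>2\<close> in a 2-group\<close>

lemma fourth_roots_subgroup:
  assumes pow4: "\<forall>x\<in>carrier G. \<forall>y\<in>carrier G. (x \<otimes> y) [^] (4::nat) = x [^] (4::nat) \<otimes> y [^] (4::nat)"
  shows "subgroup {g \<in> carrier G. g [^] (4::nat) = \<one>} G"
proof (rule subgroupI)
  fix a assume "a \<in> {g \<in> carrier G. g [^] (4::nat) = \<one>}"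
  thus "inv a \<in> {g \<in> carrier G. g [^] (4::nat) = \<one>}" by (simp add: nat_pow_inv)
next
  fix a b assume "a \<in> {g \<in> carrier G. g [^] (4::nat) = \<one>}" "b \<in> {g \<in> carrier G. g [^] (4::nat) = \<one>}"
  thus "a \<otimes> b \<in> {g \<in> carrier G. g [^] (4::nat) = \<one>}" using pow4 by simp
qed auto

lemma Omega2_eq_fourth_roots:
  assumes two_group: "order G = 2 ^ n"
    and pow4: "\<forall>x\<in>carrier G. \<forall>y\<in>carrier G. (x \<otimes> y) [^] (4::nat) = x [^] (4::nat) \<otimes> y [^] (4::nat)"
  shows "Omega2 G = {g \<in> carrier G. g [^] (4::nat) = \<one>}"
proof
  have "x [^] (4::nat) = \<one>" if x: "x \<in> carrier G" and "ord x \<le> 4" for x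
  proof -
    have "ord x dvd 2 ^ n" using ord_dvd_group_order[OF x] two_group by simp
    thus ?thesis using dvd_four_if_dvd_power_of_two \<open>ord x \<le> 4\<close> pow_eq_id[OF x] by blast
  qed
  thus "Omega2 G \<subseteq> {g \<in> carrier G. g [^] (4::nat) = \<one>}"
    unfolding Omega2_def by (intro generate_subgroup_incl[OF _ fourth_roots_subgroup[OF pow4]]) auto
next
  show "{g \<in> carrier G. g [^] (4::nat) = \<one>} \<subseteq> Omega2 G"
    unfolding Omega2_def by (auto intro!: generate.incl dvd_imp_le simp: pow_eq_id)
qed

section \<open>Automorphisms of odd order fixing \<open>\<Omega>\<^sub>2\<close>\<close>

lemma AutoGroup_mult_apply:
  assumes "f \<in> auto G" "g \<in> auto G" "x \<in> carrier G"
  shows "(f \<otimes>\<^bsub>AutoGroup G\<^esub> g) x = f (g x)"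
  using assms by (simp add: AutoGroup_def BijGroup_def auto_def compose_def)

lemma AutoGroup_one_apply: "x \<in> carrier G \<Longrightarrow> \<one>\<^bsub>AutoGroup G\<^esub> x = x"
  by (simp add: AutoGroup_def BijGroup_def)

lemma AutoGroup_pow_apply:
  assumes f: "f \<in> auto G" and x: "x \<in> carrier G"
  shows "(f [^]\<^bsub>AutoGroup G\<^esub> m) x = (f ^^ m) x"
proof (induction m)
  case 0
  show ?case using x by (simp add: AutoGroup_one_apply)
next
  case (Suc m)
  have mA: "monoid (AutoGroup G)" using AutoGroup group.is_monoid by blast
  have fA: "f \<in> carrier (AutoGroup G)" using f by (simp add: AutoGroup_def)
  have fm: "f [^]\<^bsub>AutoGroup G\<^esub> m \<in> auto G"
    using monoid.nat_pow_closed[OF mA fA] by (simp add: AutoGroup_def)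
  have "(f [^]\<^bsub>AutoGroup G\<^esub> Suc m) x = (f \<otimes>\<^bsub>AutoGroup G\<^esub> f [^]\<^bsub>AutoGroup G\<^esub> m) x"
    using monoid.nat_pow_Suc2[OF mA fA] by simp
  also have "\<dots> = f ((f ^^ m) x)" using AutoGroup_mult_apply[OF f fm x] Suc.IH by simp
  finally show ?case by simp
qed

lemma fixed_if_fourth_power_fixed:
  assumes pow4: "\<forall>x\<in>carrier G. \<forall>y\<in>carrier G. (x \<otimes> y) [^] (4::nat) = x [^] (4::nat) \<otimes> y [^] (4::nat)"
    and b: "b \<in> hom G G" and m: "odd m" and periodic: "(b ^^ m) x = x"
    and fix4: "\<forall>z\<in>carrier G. z [^] (4::nat) = \<one> \<longrightarrow> b z = z"
    and x: "x \<in> carrier G" and bx4: "b (x [^] (4::nat)) = x [^] (4::nat)"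
  shows "b x = x"
proof -
  have bx: "b x \<in> carrier G" using b x by (auto simp: hom_def)
  define z where "z = inv x \<otimes> b x"
  have zc: "z \<in> carrier G" using x bx by (simp add: z_def)
  have bx_eq: "b x = x \<otimes> z" using x bx by (simp add: z_def m_assoc[symmetric])
  have "z [^] (4::nat) = inv (x [^] (4::nat)) \<otimes> b (x [^] (4::nat))"
    using pow4 x bx hom_nat_pow[OF b x is_group is_group] by (simp add: z_def nat_pow_inv)
  hence z4: "z [^] (4::nat) = \<one>" using bx4 x by simp
  hence bz: "b z = z" using fix4 zc by blast
  have iterate: "(b ^^ k) x = x \<otimes> z [^] k" for k
  proof (induction k)
    case 0
    show ?case using x by simp
  next
    case (Suc k)
    have "(b ^^ Suc k) x = b x \<otimes> b (z [^] k)" using Suc.IH b x zc by (simp add: hom_mult)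
    also have "\<dots> = x \<otimes> z \<otimes> z [^] k" using bx_eq bz hom_nat_pow[OF b zc is_group is_group] by simp
    also have "\<dots> = x \<otimes> z [^] Suc k" using x zc by (metis m_assoc nat_pow_Suc2 nat_pow_closed)
    finally show ?case .
  qed
  have "x \<otimes> z [^] m = x \<otimes> \<one>" using iterate[of m] periodic x by simp
  hence "z [^] m = \<one>" using x zc l_cancel by (metis nat_pow_closed one_closed)
  hence "ord z = 1"
    using common_divisor_four_odd[OF _ _ m] z4 pow_eq_id[OF zc] by simp
  thus ?thesis using bx_eq x zc ord_eq_1 by simp
qed

text \<open>In a 2-group of order \<open>2\<^sup>n\<close>, such an endomorphism fixes everything: by
  induction on \<open>k\<close> it fixes all \<open>x\<close> with \<open>x [^] 4\<^sup>k = 1\<close>, and \<open>k = n\<close> covers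
  the whole group.\<close>
lemma fixes_all_if_fixes_fourth_roots:
  assumes two_group: "order G = 2 ^ n"
    and pow4: "\<forall>x\<in>carrier G. \<forall>y\<in>carrier G. (x \<otimes> y) [^] (4::nat) = x [^] (4::nat) \<otimes> y [^] (4::nat)"
    and b: "b \<in> hom G G" and m: "odd m" and periodic: "\<forall>x\<in>carrier G. (b ^^ m) x = x"
    and fix4: "\<forall>z\<in>carrier G. z [^] (4::nat) = \<one> \<longrightarrow> b z = z"
    and x: "x \<in> carrier G"
  shows "b x = x"
proof -
  have "\<forall>x\<in>carrier G. x [^] ((4::nat) ^ k) = \<one> \<longrightarrow> b x = x" for k
  proof (induction k)
    case 0
    show ?case using hom_one[OF b is_group is_group] by auto
  next
    case (Suc k)
    show ?case
    proof (intro ballI impI)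
      fix x assume x: "x \<in> carrier G" and "x [^] ((4::nat) ^ Suc k) = \<one>"
      hence "(x [^] (4::nat)) [^] ((4::nat) ^ k) = \<one>" by (simp add: nat_pow_pow)
      hence "b (x [^] (4::nat)) = x [^] (4::nat)" using Suc.IH x by simp
      thus "b x = x" using fixed_if_fourth_power_fixed[OF pow4 b m _ fix4 x] periodic x by blast
    qed
  qed
  moreover have "x [^] ((4::nat) ^ n) = \<one>"
  proof -
    have "ord x dvd 2 ^ n" using ord_dvd_group_order[OF x] two_group by simp
    moreover have "(2::nat) ^ n dvd 4 ^ n" by (rule dvd_power_same) simp
    ultimately show ?thesis using pow_eq_id[OF x] dvd_trans by blast
  qed
  ultimately show ?thesis using x by blast
qed

lemma odd_automorphism_group_trivial:
  assumes two_group: "order G = 2 ^ n"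
    and pow4: "\<forall>x\<in>carrier G. \<forall>y\<in>carrier G. (x \<otimes> y) [^] (4::nat) = x [^] (4::nat) \<otimes> y [^] (4::nat)"
    and B: "subgroup B (AutoGroup G)" and odd: "odd (card B)"
    and fix4: "\<forall>b\<in>B. \<forall>z\<in>carrier G. z [^] (4::nat) = \<one> \<longrightarrow> b z = z"
  shows "B = {\<one>\<^bsub>AutoGroup G\<^esub>}"
proof -
  let ?A = "AutoGroup G"
  have identity: "b = \<one>\<^bsub>?A\<^esub>" if b: "b \<in> B" for b
  proof -
    have bA: "b \<in> auto G" using subgroup.subset[OF B] b by (auto simp: AutoGroup_def)
    interpret sub: group "?A\<lparr>carrier := B\<rparr>"
      by (rule subgroup.subgroup_is_group[OF B AutoGroup])
    have "b [^]\<^bsub>?A\<^esub> card B = \<one>\<^bsub>?A\<^esub>"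
      using sub.pow_order_eq_1 b monoid.nat_pow_consistent[OF group.is_monoid[OF AutoGroup]]
      by (simp add: order_def)
    hence "\<forall>x\<in>carrier G. (b ^^ card B) x = x"
      using AutoGroup_pow_apply[OF bA] AutoGroup_one_apply by metis
    hence "\<forall>x\<in>carrier G. b x = x"
      using fixes_all_if_fixes_fourth_roots[OF two_group pow4 _ odd] bA fix4 b
      by (auto simp: auto_def)
    moreover have "b \<in> extensional (carrier G)" using bA by (auto simp: auto_def Bij_def)
    ultimately show ?thesis by (auto simp: AutoGroup_def BijGroup_def extensional_def)
  qed
  thus ?thesis using subgroup.one_closed[OF B] by blast
qed

end

theorem lemma2p2:
  fixes P :: "('a, 'b) monoid_scheme"
  assumes "group P"
    and "finite (carrier P)"
    and "\<exists>n::nat. order P = 2 ^ n"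
    and "elementary_abelian 2 (P Mod center P)"
  shows "(\<forall>x \<in> carrier P. \<forall>y \<in> carrier P.
            (x \<otimes>\<^bsub>P\<^esub> y) [^]\<^bsub>P\<^esub> (4::nat) = x [^]\<^bsub>P\<^esub> (4::nat) \<otimes>\<^bsub>P\<^esub> y [^]\<^bsub>P\<^esub> (4::nat))
       \<and> (\<forall>g \<in> Omega2 P. g [^]\<^bsub>P\<^esub> (4::nat) = \<one>\<^bsub>P\<^esub>)
       \<and> (\<forall>B. subgroup B (AutoGroup P) \<and> odd (card B)
               \<and> (\<forall>b \<in> B. \<forall>x \<in> Omega2 P. b x = x)
             \<longrightarrow> B = {\<one>\<^bsub>AutoGroup P\<^esub>})"
proof -
  interpret group P by fact
  obtain n where two_group: "order P = 2 ^ n" using assms(3) by blast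
  have squares: "\<forall>x\<in>carrier P. x \<otimes>\<^bsub>P\<^esub> x \<in> center P"
    using square_in_normal[OF center_normal] assms(4) by (simp add: elementary_abelian_def)
  have commutators: "\<forall>x\<in>carrier P. \<forall>y\<in>carrier P. \<exists>c\<in>center P. y \<otimes>\<^bsub>P\<^esub> x = c \<otimes>\<^bsub>P\<^esub> (x \<otimes>\<^bsub>P\<^esub> y)"
    using commute_modulo_normal[OF center_normal] assms(4) by (simp add: elementary_abelian_def)
  have pow4: "\<forall>x\<in>carrier P. \<forall>y\<in>carrier P.
      (x \<otimes>\<^bsub>P\<^esub> y) [^]\<^bsub>P\<^esub> (4::nat) = x [^]\<^bsub>P\<^esub> (4::nat) \<otimes>\<^bsub>P\<^esub> y [^]\<^bsub>P\<^esub> (4::nat)"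
    using fourth_power_mult[OF squares commutators] by blast
  have Omega2: "Omega2 P = {g \<in> carrier P. g [^]\<^bsub>P\<^esub> (4::nat) = \<one>\<^bsub>P\<^esub>}"
    by (rule Omega2_eq_fourth_roots[OF two_group pow4])
  show ?thesis
    using pow4 odd_automorphism_group_trivial[OF two_group pow4] by (simp add: Omega2)
qed

end
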